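(* For $n\ge1$, \begin{align*} \left|\Pi_n\wr C_2(1^11^1,1^12^2)\right|&=\sum_{j\geq 0}\sum_{i=1}^n \binom{i-1}{j}\binom{n-i}{j}j! +\sum_{j\geq 0} \sum_{i=2}^n(i-1)\binom{i-2}{j}\binom{n-i}{j}j!\\ &\quad+ \sum_{j\geq 0}\sum_{i=1}^{n-1}\binom{i-1}{j}\binom{n-i-1}{j}j!+1. \end{align*}
   Context: For $n\ge0$ let $[n]=\{1,\dots,n\}$. A $2$-colored set partition of $[n]$ is a set partition of $[n]$ together with an assignment of a color from $\{1,2\}$ to each element; $\Pi_n\wr C_2$ is the set of these. For a set $S$ of patterns, $\Pi_n\wr C_2(S)$ is the set of such colored partitions avoiding every pattern in $S$ in the pattern sense. For the patterns used here: $\sigma$ contains $1^11^1$ iff two elements in the same block have the same color; $\sigma$ contains $1^12^2$ iff there are $i<j$ in different blocks with $i$ colored $1$ and $j$ colored $2$. Binomial coefficients $\binom{a}{b}$ with $b>a$ or $a<0$ are $0$. *)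

theory Defs
  imports Main "HOL-Library.Disjoint_Sets" "HOL-Library.FuncSet"
begin

definition colored_partitions :: "nat \<Rightarrow> (nat set set \<times> (nat \<Rightarrow> nat)) set" where
  "colored_partitions n =
     {(P, c). partition_on {1..n} P \<and> c \<in> {1..n} \<rightarrow>\<^sub>E {1, 2}}"

definition contains_11_11 :: "nat set set \<times> (nat \<Rightarrow> nat) \<Rightarrow> bool" where
  "contains_11_11 \<sigma> = (case \<sigma> of (P, c) \<Rightarrow>
     (\<exists>B\<in>P. \<exists>i\<in>B. \<exists>j\<in>B. i < j \<and> c i = c j))"

definition contains_11_22 :: "nat set set \<times> (nat \<Rightarrow> nat) \<Rightarrow> bool" where
  "contains_11_22 \<sigma> = (case \<sigma> of (P, c) \<Rightarrow>
     (\<exists>B\<in>P. \<exists>B'\<in>P. B \<noteq> B' \<and> (\<exists>i\<in>B. \<exists>j\<in>B'. i < j \<and> c i = 1 \<and> c j = 2)))"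

definition avoiders :: "nat \<Rightarrow> (nat set set \<times> (nat \<Rightarrow> nat)) set" where
  "avoiders n = {\<sigma> \<in> colored_partitions n. \<not> contains_11_11 \<sigma> \<and> \<not> contains_11_22 \<sigma>}"

end

theory Submission
  imports Defs
begin

text \<open>In an avoider every block has at most two elements, and the two elements of a pair have
  different colors. If no element colored 1 precedes an element colored 2, the coloring is
  \<open>2\<^sup>a 1\<^sup>n\<^sup>-\<^sup>a\<close> and the pairs form a partial matching between \<open>{1..a}\<close> and \<open>{a+1..n}\<close>.
  Otherwise such a 1 and 2 must share a block; this forces them to be adjacent, the coloring to be
  \<open>2\<^sup>a 1 2 1\<^sup>n\<^sup>-\<^sup>a\<^sup>-\<^sup>2\<close> and the remaining pairs to match \<open>{1..a}\<close> with \<open>{a+3..n}\<close>.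
  Partial matchings between an \<open>a\<close>-set and a \<open>b\<close>-set are counted by
  \<open>\<Sum>\<^sub>j (a choose j) (b choose j) j!\<close>; writing \<open>M\<close> for this number, the stated formula is a rearrangement of
  \<open>\<Sum>\<^sub>a M(a, n - a) + \<Sum>\<^sub>a M(a, n - 2 - a)\<close> using \<open>M(a+1, b) = M(a, b) + b M(a, b - 1)\<close>.\<close>

text \<open>Partial matchings between an \<open>a\<close>-set and a \<open>b\<close>-set: the first element of the \<open>a\<close>-set
  is unmatched or matched to one of \<open>b\<close> partners.\<close>

fun num_matchings :: "nat \<Rightarrow> nat \<Rightarrow> nat" where
  "num_matchings 0 b = 1"
| "num_matchings (Suc a) b = num_matchings a b + b * num_matchings a (b - 1)"

lemma choose_Suc_mult_fact: "(b choose Suc j) * fact (Suc j) = b * (((b - 1) choose j) * fact j)"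
proof (cases b)
  case (Suc b')
  have "(Suc b' choose Suc j) * fact (Suc j) = (Suc j * (Suc b' choose Suc j)) * fact j"
    by (simp add: fact_Suc algebra_simps)
  also have "\<dots> = Suc b' * ((b' choose j) * fact j)"
    by (simp only: Suc_times_binomial mult.assoc)
  finally show ?thesis using Suc by simp
qed simp

lemma num_matchings_eq_sum: "num_matchings a b = (\<Sum>j\<le>a. (a choose j) * (b choose j) * fact j)"
proof (induction a arbitrary: b)
  case (Suc a)
  let ?S = "\<lambda>b. \<Sum>j\<le>a. (a choose j) * (b choose j) * fact j"
  have "(\<Sum>j\<le>Suc a. (Suc a choose j) * (b choose j) * fact j)
      = 1 + (\<Sum>j\<le>a. (Suc a choose Suc j) * (b choose Suc j) * fact (Suc j))"
    by (subst sum.atMost_Suc_shift) simp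
  also have "\<dots> = 1 + (\<Sum>j\<le>a. b * ((a choose j) * ((b - 1) choose j) * fact j)
                 + (a choose Suc j) * (b choose Suc j) * fact (Suc j))"
    using choose_Suc_mult_fact[of b]
    by (intro arg_cong[where f="\<lambda>x. 1 + x"] sum.cong refl) (simp add: binomial_Suc_Suc algebra_simps)
  also have "\<dots> = b * ?S (b - 1) + (\<Sum>j\<le>Suc a. (a choose j) * (b choose j) * fact j)"
    by (simp only: sum.atMost_Suc_shift) (simp add: sum.distrib sum_distrib_left mult.assoc)
  also have "\<dots> = ?S b + b * ?S (b - 1)"
    by simp
  finally show ?case using Suc.IH by simp
qed simp

lemma num_matchings_eq_sum_upto:
  "a \<le> k \<Longrightarrow> (\<Sum>j\<le>k. (a choose j) * (b choose j) * fact j) = num_matchings a b"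
  by (induction k rule: dec_induct) (simp_all add: num_matchings_eq_sum)

lemma num_matchings_commute: "num_matchings a b = num_matchings b a"
  using num_matchings_eq_sum_upto[of a "a + b" b] num_matchings_eq_sum_upto[of b "a + b" a]
  by (simp add: mult.commute)

lemma partition_on_same_block:
  "partition_on A P \<Longrightarrow> B \<in> P \<Longrightarrow> B' \<in> P \<Longrightarrow> x \<in> B \<Longrightarrow> x \<in> B' \<Longrightarrow> B = B'"
  using disjointD[OF partition_onD2] by blast

lemma card_image_insert: "(\<And>Q. Q \<in> S \<Longrightarrow> B \<notin> Q) \<Longrightarrow> card (insert B ` S) = card S"
  by (rule card_image, rule inj_onI) (metis insert_ident)

text \<open>A partial matching between \<open>X\<close> and \<open>Y\<close>, encoded as the partition of \<open>X \<union> Y\<close> into its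
  edges and unmatched points.\<close>

definition partial_matchings :: "'a set \<Rightarrow> 'a set \<Rightarrow> 'a set set set" where
  "partial_matchings X Y =
     {P. partition_on (X \<union> Y) P \<and> (\<forall>B\<in>P. (\<exists>z. B = {z}) \<or> (\<exists>x\<in>X. \<exists>y\<in>Y. B = {x, y}))}"

lemma finite_partial_matchings: "finite X \<Longrightarrow> finite Y \<Longrightarrow> finite (partial_matchings X Y)"
  unfolding partial_matchings_def
  by (rule finite_subset[OF _ finitely_many_partition_on[of "X \<union> Y"]]) auto

lemma partial_matchings_empty: "partial_matchings {} Y = {(\<lambda>y. {y}) ` Y}"
proof (intro equalityI subsetI)
  fix P assume "P \<in> partial_matchings {} Y"
  then have p: "partition_on Y P" and single: "\<forall>B\<in>P. \<exists>z. B = {z}"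
    by (simp_all add: partial_matchings_def)
  have "B \<in> P \<longleftrightarrow> (\<exists>y\<in>Y. B = {y})" for B
    using single partition_onD1[OF p] by (metis UnionE UnionI singletonD singletonI)
  then show "P \<in> {(\<lambda>y. {y}) ` Y}" by blast
next
  fix P assume "P \<in> {(\<lambda>y. {y}) ` Y}"
  then show "P \<in> partial_matchings {} Y"
    using partition_on_singletons[of Y] by (auto simp: partial_matchings_def)
qed

lemma partial_matchings_Un:
  assumes P: "P \<in> partial_matchings X Y" and Q: "Q \<in> partial_matchings X' Y'"
    and disj: "(X \<union> Y) \<inter> (X' \<union> Y') = {}"
  shows "P \<union> Q \<in> partial_matchings (X \<union> X') (Y \<union> Y')"
proof -
  have p: "partition_on (X \<union> Y) P" and q: "partition_on (X' \<union> Y') Q"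
    using P Q by (simp_all add: partial_matchings_def)
  have "partition_on (X \<union> X' \<union> (Y \<union> Y')) (P \<union> Q)"
    unfolding partition_on_def
  proof (intro conjI)
    show "\<Union>(P \<union> Q) = X \<union> X' \<union> (Y \<union> Y')"
      using partition_onD1[OF p] partition_onD1[OF q] by auto
    show "disjoint (P \<union> Q)"
      using disjoint_union[OF partition_onD2[OF p] partition_onD2[OF q]] disj
        partition_onD1[OF p] partition_onD1[OF q] by auto
    show "{} \<notin> P \<union> Q"
      using partition_onD3[OF p] partition_onD3[OF q] by auto
  qed
  moreover have "(\<exists>z. B = {z}) \<or> (\<exists>x\<in>X \<union> X'. \<exists>y\<in>Y \<union> Y'. B = {x, y})" if "B \<in> P \<union> Q" for B
    using that P Q unfolding partial_matchings_def by blast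
  ultimately show ?thesis
    by (simp add: partial_matchings_def)
qed

lemma partition_on_Diff_block: "partition_on A P \<Longrightarrow> B \<in> P \<Longrightarrow> partition_on (A - B) (P - {B})"
  using partition_on_insert[of B "P - {B}" A] partition_on_same_block[of A P B]
  by (auto simp: disjnt_def insert_absorb)

lemma partial_matchings_Diff_block:
  assumes P: "P \<in> partial_matchings X Y" and B: "B \<in> P"
  shows "P - {B} \<in> partial_matchings (X - B) (Y - B)"
proof -
  have p: "partition_on (X \<union> Y) P"
    using P by (simp add: partial_matchings_def)
  have "(\<exists>z. C = {z}) \<or> (\<exists>x\<in>X - B. \<exists>y\<in>Y - B. C = {x, y})" if C: "C \<in> P - {B}" for C
  proof -
    have "C \<inter> B = {}"
      using disjointD[OF partition_onD2[OF p]] C B by blast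
    moreover have "(\<exists>z. C = {z}) \<or> (\<exists>x\<in>X. \<exists>y\<in>Y. C = {x, y})"
      using C P by (simp add: partial_matchings_def)
    ultimately show ?thesis by blast
  qed
  with partition_on_Diff_block[OF p B] show ?thesis
    by (simp add: partial_matchings_def Un_Diff)
qed

lemma partial_matchings_insert:
  assumes x: "x \<notin> X \<union> Y" and XY: "X \<inter> Y = {}"
  shows "partial_matchings (insert x X) Y =
    insert {x} ` partial_matchings X Y \<union> (\<Union>y\<in>Y. insert {x, y} ` partial_matchings X (Y - {y}))"
    (is "_ = ?Single \<union> ?Pairs")
proof
  show "partial_matchings (insert x X) Y \<subseteq> ?Single \<union> ?Pairs"
  proof
    fix P assume P: "P \<in> partial_matchings (insert x X) Y"
    then have "partition_on (insert x X \<union> Y) P"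
      by (simp add: partial_matchings_def)
    then have "x \<in> \<Union>P"
      using partition_onD1 by blast
    then obtain B where B: "B \<in> P" "x \<in> B" by blast
    have rest: "P - {B} \<in> partial_matchings (insert x X - B) (Y - B)"
      using partial_matchings_Diff_block[OF P B(1)] .
    have "(\<exists>z. B = {z}) \<or> (\<exists>u\<in>insert x X. \<exists>v\<in>Y. B = {u, v})"
      using P B(1) unfolding partial_matchings_def by blast
    then consider "B = {x}" | y where "y \<in> Y" "B = {x, y}"
      using B(2) x by blast
    then show "P \<in> ?Single \<union> ?Pairs"
    proof cases
      case 1
      then have "insert x X - B = X" "Y - B = Y"
        using x by auto
      then have "P - {B} \<in> partial_matchings X Y"
        using rest by simp
      moreover have "P = insert {x} (P - {B})"
        using B 1 by blast
      ultimately have "P \<in> ?Single"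
        by (intro image_eqI)
      then show ?thesis ..
    next
      case 2
      then have "insert x X - B = X" "Y - B = Y - {y}"
        using x XY by auto
      then have "P - {B} \<in> partial_matchings X (Y - {y})"
        using rest by simp
      moreover have "P = insert {x, y} (P - {B})"
        using B 2 by blast
      ultimately have "P \<in> insert {x, y} ` partial_matchings X (Y - {y})"
        by (intro image_eqI)
      then show ?thesis
        using 2 by blast
    qed
  qed
  have single: "{{x}} \<in> partial_matchings {x} {}"
    and pair: "{{x, y}} \<in> partial_matchings {x} {y}" for y
    by (auto simp: partial_matchings_def partition_on_def disjoint_def)
  show "?Single \<union> ?Pairs \<subseteq> partial_matchings (insert x X) Y"
  proof (intro Un_least image_subsetI UN_least)
    fix Q assume "Q \<in> partial_matchings X Y"
    moreover have "(X \<union> Y) \<inter> ({x} \<union> {}) = {}"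
      using x by auto
    ultimately have "Q \<union> {{x}} \<in> partial_matchings (X \<union> {x}) (Y \<union> {})"
      using partial_matchings_Un single by blast
    then show "insert {x} Q \<in> partial_matchings (insert x X) Y"
      by simp
  next
    fix y Q assume y: "y \<in> Y" and "Q \<in> partial_matchings X (Y - {y})"
    moreover have "(X \<union> (Y - {y})) \<inter> ({x} \<union> {y}) = {}"
      using x XY y by auto
    ultimately have "Q \<union> {{x, y}} \<in> partial_matchings (X \<union> {x}) (Y - {y} \<union> {y})"
      using partial_matchings_Un pair by blast
    moreover have "Y - {y} \<union> {y} = Y"
      using y by auto
    ultimately show "insert {x, y} Q \<in> partial_matchings (insert x X) Y"
      by simp
  qed
qed

lemma card_partial_matchings_insert:
  assumes x: "x \<notin> X \<union> Y" and XY: "X \<inter> Y = {}" and fin: "finite X" "finite Y"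
  shows "card (partial_matchings (insert x X) Y)
    = card (partial_matchings X Y) + (\<Sum>y\<in>Y. card (partial_matchings X (Y - {y})))"
proof -
  have fresh: "B \<notin> Q" if "Q \<in> partial_matchings X Z" "x \<in> B" "Z \<subseteq> Y" for Q B Z
    using that x partition_onD1[of "X \<union> Z" Q] by (auto simp: partial_matchings_def)
  have members: "partial_matchings (insert x X) Y =
    insert {x} ` partial_matchings X Y \<union> (\<Union>y\<in>Y. insert {x, y} ` partial_matchings X (Y - {y}))"
    by (rule partial_matchings_insert[OF x XY])
  text \<open>The summands are told apart by the block containing \<open>x\<close>.\<close>
  have distinct_blocks: "insert B Q \<noteq> insert B' Q'"
    if "insert B Q \<in> partial_matchings (insert x X) Y" "x \<in> B" "x \<in> B'" "B \<noteq> B'" for B B' Q Q'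
    using that partition_on_same_block[of "insert x X \<union> Y" "insert B Q" B B' x]
    by (auto simp: partial_matchings_def)
  have disj_single:
    "insert {x} ` partial_matchings X Y \<inter> (\<Union>y\<in>Y. insert {x, y} ` partial_matchings X (Y - {y})) = {}"
  proof -
    have "insert {x} Q \<noteq> insert {x, y} Q'" if "Q \<in> partial_matchings X Y" "y \<in> Y" for Q Q' y
      using distinct_blocks[of "{x}" Q "{x, y}" Q'] members that x by auto
    then show ?thesis by blast
  qed
  have disj_pairs: "insert {x, y} ` partial_matchings X (Y - {y}) \<inter> insert {x, y'} ` partial_matchings X (Y - {y'}) = {}"
    if "y \<in> Y" "y' \<in> Y" "y \<noteq> y'" for y y'
  proof -
    have "insert {x, y} Q \<noteq> insert {x, y'} Q'" if "Q \<in> partial_matchings X (Y - {y})" for Q Q'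
      using distinct_blocks[of "{x, y}" Q "{x, y'}" Q'] members that \<open>y \<in> Y\<close> \<open>y \<noteq> y'\<close>
      by (auto simp: doubleton_eq_iff)
    then show ?thesis by blast
  qed
  have fin_parts: "finite (insert B ` partial_matchings X (Y - Z))" for B Z
    using fin by (simp add: finite_partial_matchings)
  have "card (partial_matchings (insert x X) Y) = card (insert {x} ` partial_matchings X Y)
      + card (\<Union>y\<in>Y. insert {x, y} ` partial_matchings X (Y - {y}))"
    unfolding members
    using fin_parts[of _ "{}"] fin_parts fin disj_single by (subst card_Un_disjoint) auto
  also have "\<dots> = card (insert {x} ` partial_matchings X Y)
      + (\<Sum>y\<in>Y. card (insert {x, y} ` partial_matchings X (Y - {y})))"
    using fin_parts fin disj_pairs by (subst card_UN_disjoint) auto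
  also have "\<dots> = card (partial_matchings X Y) + (\<Sum>y\<in>Y. card (partial_matchings X (Y - {y})))"
  proof -
    have "card (insert {x} ` partial_matchings X Y) = card (partial_matchings X Y)"
      using fresh[of _ Y] by (intro card_image_insert) auto
    moreover have "card (insert {x, y} ` partial_matchings X (Y - {y})) = card (partial_matchings X (Y - {y}))"
      for y using fresh[of _ "Y - {y}"] by (intro card_image_insert) auto
    ultimately show ?thesis by simp
  qed
  finally show ?thesis .
qed

lemma card_partial_matchings:
  assumes "finite X" "finite Y" "X \<inter> Y = {}"
  shows "card (partial_matchings X Y) = num_matchings (card X) (card Y)"
  using assms
proof (induction X arbitrary: Y rule: finite_induct)
  case empty
  then show ?case by (simp add: partial_matchings_empty)
next
  case (insert x X)
  have "card (partial_matchings X (Y - {y})) = num_matchings (card X) (card Y - 1)" if "y \<in> Y" for y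
    using insert.IH[of "Y - {y}"] insert.prems that by auto
  then have "card (partial_matchings (insert x X) Y)
      = num_matchings (card X) (card Y) + card Y * num_matchings (card X) (card Y - 1)"
    using insert by (simp add: card_partial_matchings_insert)
  then show ?case
    using insert.hyps by simp
qed

lemma partial_matchings_block_less:
  fixes X Y :: "'a :: order set"
  assumes "P \<in> partial_matchings X Y" "B \<in> P" "i \<in> B" "j \<in> B" "i < j"
    and "\<And>x y. x \<in> X \<Longrightarrow> y \<in> Y \<Longrightarrow> x < y"
  shows "i \<in> X \<and> j \<in> Y"
proof -
  have "(\<exists>z. B = {z}) \<or> (\<exists>x\<in>X. \<exists>y\<in>Y. B = {x, y})"
    using assms(1,2) by (simp add: partial_matchings_def)
  then consider z where "B = {z}" | x y where "x \<in> X" "y \<in> Y" "B = {x, y}"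
    by blast
  then show ?thesis
  proof cases
    case 2
    with assms(6) have "x < y" by blast
    with 2 assms(3-5) show ?thesis by auto
  qed (use assms(3-5) in auto)
qed

definition split_coloring :: "nat \<Rightarrow> nat \<Rightarrow> nat \<Rightarrow> nat" where
  "split_coloring n a = (\<lambda>i\<in>{1..n}. if i \<le> a then 2 else 1)"

definition pair_coloring :: "nat \<Rightarrow> nat \<Rightarrow> nat \<Rightarrow> nat" where
  "pair_coloring n a = (\<lambda>i\<in>{1..n}. if i \<le> a \<or> i = a + 2 then 2 else 1)"

lemma split_coloring_apply: "i \<in> {1..n} \<Longrightarrow> split_coloring n a i = (if i \<le> a then 2 else 1)"
  by (simp add: split_coloring_def)

lemma pair_coloring_apply: "i \<in> {1..n} \<Longrightarrow> pair_coloring n a i = (if i \<le> a \<or> i = a + 2 then 2 else 1)"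
  by (simp add: pair_coloring_def)

lemma split_coloring_eq_2_iff: "i \<in> {1..n} \<Longrightarrow> split_coloring n a i = 2 \<longleftrightarrow> i \<le> a"
  by (simp add: split_coloring_apply)

lemma pair_coloring_eq_2_iff: "i \<in> {1..n} \<Longrightarrow> pair_coloring n a i = 2 \<longleftrightarrow> i \<le> a \<or> i = a + 2"
  by (simp add: pair_coloring_apply)

definition split_avoiders :: "nat \<Rightarrow> nat \<Rightarrow> (nat set set \<times> (nat \<Rightarrow> nat)) set" where
  "split_avoiders n a = (\<lambda>P. (P, split_coloring n a)) ` partial_matchings {1..a} {a + 1..n}"

definition pair_avoiders :: "nat \<Rightarrow> nat \<Rightarrow> (nat set set \<times> (nat \<Rightarrow> nat)) set" where
  "pair_avoiders n a =
     (\<lambda>Q. (insert {a + 1, a + 2} Q, pair_coloring n a)) ` partial_matchings {1..a} {a + 3..n}"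

lemma split_avoiders_subset:
  assumes "a \<le> n"
  shows "split_avoiders n a \<subseteq> avoiders n"
proof
  fix \<sigma> assume "\<sigma> \<in> split_avoiders n a"
  then obtain P where \<sigma>: "\<sigma> = (P, split_coloring n a)" and P: "P \<in> partial_matchings {1..a} {a + 1..n}"
    by (auto simp: split_avoiders_def)
  have "{1..a} \<union> {a + 1..n} = {1..n}"
    using assms by auto
  then have p: "partition_on {1..n} P"
    using P by (simp add: partial_matchings_def)
  have sub: "B \<subseteq> {1..n}" if "B \<in> P" for B
    using that partition_onD1[OF p] by blast
  have "\<not> contains_11_11 (P, split_coloring n a)"
  proof
    assume "contains_11_11 (P, split_coloring n a)"
    then obtain B i j where B: "B \<in> P" "i \<in> B" "j \<in> B" "i < j"
      and "split_coloring n a i = split_coloring n a j"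
      unfolding contains_11_11_def prod.case by blast
    moreover have "i \<le> a" "a < j"
      using partial_matchings_block_less[OF P B] by auto
    moreover have "i \<in> {1..n}" "j \<in> {1..n}"
      using sub[OF B(1)] B by auto
    ultimately show False
      by (simp add: split_coloring_apply)
  qed
  moreover have "\<not> contains_11_22 (P, split_coloring n a)"
  proof
    assume "contains_11_22 (P, split_coloring n a)"
    then obtain B B' i j where B: "B \<in> P" "B' \<in> P" "i \<in> B" "j \<in> B'" "i < j"
      and c: "split_coloring n a i = 1" "split_coloring n a j = 2"
      unfolding contains_11_22_def prod.case by blast
    have "i \<in> {1..n}" "j \<in> {1..n}"
      using sub[OF B(1)] sub[OF B(2)] B(3,4) by auto
    then have "(if i \<le> a then 2 else 1) = (1::nat)" "(if j \<le> a then 2 else 1) = (2::nat)"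
      using c by (simp_all only: split_coloring_apply)
    with B(5) show False
      by (cases "i \<le> a"; cases "j \<le> a") simp_all
  qed
  moreover have "(P, split_coloring n a) \<in> colored_partitions n"
    using p by (simp add: colored_partitions_def split_coloring_def restrict_PiE_iff)
  ultimately show "\<sigma> \<in> avoiders n"
    by (simp add: \<sigma> avoiders_def)
qed

lemma insert_pair_partial_matchings:
  fixes a n :: nat
  assumes Q: "Q \<in> partial_matchings {1..a} {a + 3..n}" and "a + 2 \<le> n"
  shows "insert {a + 1, a + 2} Q \<in> partial_matchings {1..a + 1} {a + 2..n}"
proof -
  have "{{a + 1, a + 2}} \<in> partial_matchings {a + 1} {a + 2}"
    by (auto simp: partial_matchings_def partition_on_def disjoint_def)
  moreover have "({1..a} \<union> {a + 3..n}) \<inter> ({a + 1} \<union> {a + 2}) = {}"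
    by auto
  ultimately have "Q \<union> {{a + 1, a + 2}} \<in> partial_matchings ({1..a} \<union> {a + 1}) ({a + 3..n} \<union> {a + 2})"
    using partial_matchings_Un[OF Q] by blast
  moreover have "{1..a} \<union> {a + 1} = {1..a + 1}" "{a + 3..n} \<union> {a + 2} = {a + 2..n}"
    using assms(2) by auto
  ultimately show ?thesis
    by simp
qed

lemma pair_avoiders_subset:
  assumes "a + 2 \<le> n"
  shows "pair_avoiders n a \<subseteq> avoiders n"
proof
  fix \<sigma> assume "\<sigma> \<in> pair_avoiders n a"
  then obtain Q where \<sigma>: "\<sigma> = (insert {a + 1, a + 2} Q, pair_coloring n a)"
    and Q: "Q \<in> partial_matchings {1..a} {a + 3..n}"
    by (auto simp: pair_avoiders_def)
  define P where "P = insert {a + 1, a + 2} Q"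
  have P: "P \<in> partial_matchings {1..a + 1} {a + 2..n}"
    unfolding P_def using insert_pair_partial_matchings[OF Q assms] .
  have "{1..a + 1} \<union> {a + 2..n} = {1..n}"
    using assms by auto
  then have p: "partition_on {1..n} P"
    using P by (simp add: partial_matchings_def)
  have sub: "B \<subseteq> {1..n}" if "B \<in> P" for B
    using that partition_onD1[OF p] by blast
  have pair_block: "B = {a + 1, a + 2}" if "B \<in> P" "a + 1 \<in> B \<or> a + 2 \<in> B" for B
    using that partition_on_same_block[OF p that(1), of "{a + 1, a + 2}"] by (auto simp: P_def)
  have color: "pair_coloring n a k = (if k \<le> a \<or> k = a + 2 then 2 else 1)" if "k \<in> B" "B \<in> P" for k B
    using pair_coloring_apply sub[OF that(2)] that(1) by blast
  have "\<not> contains_11_11 (P, pair_coloring n a)"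
  proof
    assume "contains_11_11 (P, pair_coloring n a)"
    then obtain B i j where B: "B \<in> P" "i \<in> B" "j \<in> B" "i < j"
      and c: "pair_coloring n a i = pair_coloring n a j"
      unfolding contains_11_11_def prod.case by blast
    have "i \<le> a + 1" "a + 2 \<le> j"
      using partial_matchings_block_less[OF P B] by auto
    moreover have "i = a + 1 \<longleftrightarrow> j = a + 2"
      using pair_block[OF B(1)] B(2-4) by auto
    ultimately show False
      using c color[OF B(2,1)] color[OF B(3,1)] by (cases "i = a + 1") simp_all
  qed
  moreover have "\<not> contains_11_22 (P, pair_coloring n a)"
  proof
    assume "contains_11_22 (P, pair_coloring n a)"
    then obtain B B' i j where B: "B \<in> P" "B' \<in> P" "B \<noteq> B'" "i \<in> B" "j \<in> B'" "i < j"
      and c: "pair_coloring n a i = 1" "pair_coloring n a j = 2"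
      unfolding contains_11_22_def prod.case by blast
    have "\<not> (i \<le> a \<or> i = a + 2)"
      using c(1) color[OF B(4,1)] by (cases "i \<le> a \<or> i = a + 2") simp_all
    moreover have "j \<le> a \<or> j = a + 2"
      using c(2) color[OF B(5,2)] by (cases "j \<le> a \<or> j = a + 2") simp_all
    ultimately have "i = a + 1" "j = a + 2"
      using B(6) by linarith+
    then show False
      using pair_block B by blast
  qed
  moreover have "(P, pair_coloring n a) \<in> colored_partitions n"
    using p by (simp add: colored_partitions_def pair_coloring_def restrict_PiE_iff)
  ultimately show "\<sigma> \<in> avoiders n"
    by (simp add: \<sigma> P_def avoiders_def)
qed

lemma down_closed_eq_atLeastAtMost:
  fixes S :: "nat set"
  assumes fin: "finite S" and "0 \<notin> S" and down: "\<And>i j. j \<in> S \<Longrightarrow> 0 < i \<Longrightarrow> i \<le> j \<Longrightarrow> i \<in> S"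
  shows "S = {1..card S}"
proof (cases "S = {}")
  case False
  have "S = {1..Max S}"
  proof
    show "S \<subseteq> {1..Max S}"
      using Max_ge[OF fin] \<open>0 \<notin> S\<close> by (auto simp: Suc_le_eq) (metis gr0I)
    show "{1..Max S} \<subseteq> S"
      using down[OF Max_in[OF fin False]] by auto
  qed
  then show ?thesis
    by (metis card_atLeastAtMost diff_Suc_1)
qed simp

locale avoider =
  fixes n :: nat and P :: "nat set set" and c :: "nat \<Rightarrow> nat"
  assumes avoids: "(P, c) \<in> avoiders n"
begin

lemma blocks_partition: "partition_on {1..n} P"
  using avoids by (simp add: avoiders_def colored_partitions_def)

lemma block_subset: "B \<in> P \<Longrightarrow> B \<subseteq> {1..n}"
  using partition_onD1[OF blocks_partition] by blast

lemma color_cases: "i \<in> {1..n} \<Longrightarrow> c i = 1 \<or> c i = 2"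
  using avoids PiE_mem[of c "{1..n}" "\<lambda>_. {1, 2}" i]
  by (simp add: avoiders_def colored_partitions_def)

lemma coloring_eq_restrict:
  assumes "\<And>i. i \<in> {1..n} \<Longrightarrow> c i = f i"
  shows "c = restrict f {1..n}"
proof -
  have "c \<in> extensional {1..n}"
    using avoids by (simp add: avoiders_def colored_partitions_def PiE_def)
  then have "c = restrict c {1..n}"
    by (simp add: extensional_restrict)
  also have "\<dots> = restrict f {1..n}"
    using assms by (rule restrict_ext)
  finally show ?thesis .
qed

lemma block_colors_differ:
  assumes "B \<in> P" "i \<in> B" "j \<in> B" "i \<noteq> j"
  shows "c i \<noteq> c j"
proof -
  have "\<not> contains_11_11 (P, c)"
    using avoids by (simp add: avoiders_def)
  then show ?thesis
    using assms unfolding contains_11_11_def prod.case by (metis linorder_neqE_nat)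
qed

lemma block_cases:
  assumes B: "B \<in> P"
  shows "(\<exists>z. B = {z}) \<or> (\<exists>x y. x < y \<and> c x \<noteq> c y \<and> B = {x, y})"
proof -
  have fin: "finite B"
    using block_subset[OF B] finite_subset by blast
  have "B \<noteq> {}"
    using partition_onD3[OF blocks_partition] B by blast
  then obtain x where x: "x \<in> B" "\<forall>y\<in>B. x \<le> y"
    using Min_in[OF fin] Min_le[OF fin] by blast
  show ?thesis
  proof (cases "B = {x}")
    case False
    then obtain y where y: "y \<in> B" "y \<noteq> x"
      using x(1) by blast
    text \<open>A third element would need a third color.\<close>
    have "z \<in> {x, y}" if "z \<in> B" for z
    proof (rule ccontr)
      assume "z \<notin> {x, y}"
      then have "c x \<noteq> c y" "c x \<noteq> c z" "c y \<noteq> c z"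
        using block_colors_differ[OF B] x(1) y that by auto
      moreover have "c x = 1 \<or> c x = 2" "c y = 1 \<or> c y = 2" "c z = 1 \<or> c z = 2"
        using color_cases block_subset[OF B] x(1) y(1) that by blast+
      ultimately show False by auto
    qed
    then have "B = {x, y}"
      using x(1) y(1) by blast
    moreover have "x < y" "c x \<noteq> c y"
      using x y block_colors_differ[OF B] by auto
    ultimately show ?thesis by blast
  qed blast
qed

lemma one_two_block:
  assumes "i \<in> {1..n}" "j \<in> {1..n}" "i < j" "c i = 1" "c j = 2"
  shows "{i, j} \<in> P"
proof -
  obtain B B' where B: "B \<in> P" "i \<in> B" and B': "B' \<in> P" "j \<in> B'"
    using assms(1,2) partition_onD1[OF blocks_partition] by blast
  have "\<not> contains_11_22 (P, c)"
    using avoids by (simp add: avoiders_def)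
  then have "B = B'"
    using B B' assms(3-5) unfolding contains_11_22_def prod.case by blast
  with B B' assms(3) block_cases[OF B(1)] show ?thesis
    by (auto simp: doubleton_eq_iff)
qed

lemma pair_blocks_eq: "{x, y} \<in> P \<Longrightarrow> {x, z} \<in> P \<Longrightarrow> y = z"
  using partition_on_same_block[OF blocks_partition, of "{x, y}" "{x, z}" x] by (auto simp: doubleton_eq_iff)

text \<open>A \<open>1\<close> before a \<open>2\<close> forces them into one block, so there is at most one such pair.\<close>

lemma one_two_unique:
  assumes "i \<in> {1..n}" "j \<in> {1..n}" "i < j" "c i = 1" "c j = 2"
    and "i' \<in> {1..n}" "j' \<in> {1..n}" "i' < j'" "c i' = 1" "c j' = 2"
  shows "i' = i \<and> j' = j"
proof -
  have ij: "{i, j} \<in> P"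
    using one_two_block assms(1-5) by blast
  have i'j: "j' \<le> i \<Longrightarrow> {i', j} \<in> P" "{i', j} \<in> P \<Longrightarrow> i' = i"
    using one_two_block[of i' j] pair_blocks_eq[of j i' i] ij assms by (auto simp: insert_commute)
  show ?thesis
  proof (cases "i < j'")
    case True
    then have "j' = j"
      using one_two_block[of i j'] pair_blocks_eq[of i j j'] ij assms by auto
    then show ?thesis
      using one_two_block[of i' j] i'j(2) assms by auto
  qed (use i'j assms in auto)
qed

lemma partial_matching_by_colors:
  assumes Q: "Q \<subseteq> P" "partition_on S Q"
    and no_one_two: "\<And>i j. i \<in> S \<Longrightarrow> j \<in> S \<Longrightarrow> i < j \<Longrightarrow> c i = 1 \<Longrightarrow> c j \<noteq> 2"
  shows "Q \<in> partial_matchings {i \<in> S. c i = 2} {i \<in> S. c i = 1}"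
proof -
  have S: "S \<subseteq> {1..n}"
    using Q block_subset partition_onD1[OF Q(2)] by blast
  then have "{i \<in> S. c i = 2} \<union> {i \<in> S. c i = 1} = S"
    using color_cases by blast
  moreover have "(\<exists>z. B = {z}) \<or> (\<exists>x\<in>{i \<in> S. c i = 2}. \<exists>y\<in>{i \<in> S. c i = 1}. B = {x, y})"
    if B: "B \<in> Q" for B
  proof -
    from block_cases[of B] B Q(1)
    consider z where "B = {z}" | x y where "x < y" "c x \<noteq> c y" "B = {x, y}"
      by blast
    then show ?thesis
    proof cases
      case 2
      moreover have xy: "x \<in> S" "y \<in> S"
        using 2 B partition_onD1[OF Q(2)] by auto
      ultimately have "c x = 2" "c y = 1"
        using no_one_two[OF xy] color_cases S xy by (metis subsetD)+
      with 2 xy show ?thesis by blast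
    qed blast
  qed
  ultimately show ?thesis
    using Q(2) by (simp add: partial_matchings_def)
qed

lemma split_case:
  assumes no_one_two: "\<And>i j. i \<in> {1..n} \<Longrightarrow> j \<in> {1..n} \<Longrightarrow> i < j \<Longrightarrow> c i = 1 \<Longrightarrow> c j \<noteq> 2"
  shows "\<exists>a\<le>n. (P, c) \<in> split_avoiders n a"
proof -
  define a where "a = card {i \<in> {1..n}. c i = 2}"
  have twos: "{i \<in> {1..n}. c i = 2} = {1..a}"
    unfolding a_def
  proof (rule down_closed_eq_atLeastAtMost)
    fix i j assume j: "j \<in> {i \<in> {1..n}. c i = 2}" and "0 < i" "i \<le> j"
    then have "i \<in> {1..n}" by auto
    with j \<open>i \<le> j\<close> show "i \<in> {i \<in> {1..n}. c i = 2}"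
      using no_one_two[of i j] color_cases[of i] by (cases "i = j") auto
  qed auto
  have "a \<le> card {1..n}"
    unfolding a_def by (rule card_mono) auto
  then have "a \<le> n" by simp
  have two_iff: "c i = 2 \<longleftrightarrow> i \<le> a" if "i \<in> {1..n}" for i
  proof -
    have "i \<in> {i \<in> {1..n}. c i = 2} \<longleftrightarrow> i \<in> {1..a}"
      by (simp only: twos)
    then show ?thesis using that by auto
  qed
  then have "c = split_coloring n a"
    unfolding split_coloring_def using color_cases by (intro coloring_eq_restrict) auto
  moreover have "c i = 1 \<longleftrightarrow> a < i" if "i \<in> {1..n}" for i
    using two_iff[OF that] color_cases[OF that] by auto
  then have "{i \<in> {1..n}. c i = 1} = {a + 1..n}"
    by auto
  then have "P \<in> partial_matchings {1..a} {a + 1..n}"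
    using partial_matching_by_colors[OF _ blocks_partition no_one_two] twos by (simp only: order_refl)
  ultimately show ?thesis
    using \<open>a \<le> n\<close> by (auto simp: split_avoiders_def)
qed

lemma one_two_coloring:
  assumes ij: "i \<in> {1..n}" "j \<in> {1..n}" "i < j" "c i = 1" "c j = 2"
  shows "j = i + 1" and "c = pair_coloring n (i - 1)"
proof -
  note unique = one_two_unique[OF ij]
  show "j = i + 1"
  proof (rule ccontr)
    assume "j \<noteq> i + 1"
    then have k: "i + 1 \<in> {1..n}" "i + 1 < j"
      using ij by auto
    show False
      using color_cases[OF k(1)] unique[of i "i + 1"] unique[of "i + 1" j] k ij by auto
  qed
  define a where "a = i - 1"
  have ia: "i = a + 1" and ja: "j = a + 2"
    using ij \<open>j = i + 1\<close> by (auto simp: a_def)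
  have two_iff: "c k = 2 \<longleftrightarrow> k \<le> a \<or> k = a + 2" if k: "k \<in> {1..n}" for k
  proof -
    consider "k \<le> a" | "k = a + 1" | "k = a + 2" | "a + 2 < k"
      by linarith
    then show ?thesis
    proof cases
      case 1
      then show ?thesis using k color_cases[OF k] unique[of k j] ij ia by auto
    next
      case 4
      then show ?thesis using k unique[of i k] ij ja by auto
    qed (use ij ia ja in simp_all)
  qed
  have "c k = (if k \<le> a \<or> k = a + 2 then 2 else 1)" if "k \<in> {1..n}" for k
    using two_iff[OF that] color_cases[OF that] by (cases "k \<le> a \<or> k = a + 2") auto
  then show "c = pair_coloring n (i - 1)"
    unfolding pair_coloring_def a_def[symmetric] by (rule coloring_eq_restrict)
qed

lemma pair_case:
  assumes ij: "i \<in> {1..n}" "j \<in> {1..n}" "i < j" "c i = 1" "c j = 2"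
  shows "\<exists>a. a + 2 \<le> n \<and> (P, c) \<in> pair_avoiders n a"
proof -
  note unique = one_two_unique[OF ij]
  define a where "a = i - 1"
  have ia: "i = a + 1" and ja: "j = a + 2"
    using ij one_two_coloring(1)[OF ij] by (auto simp: a_def)
  have coloring: "c = pair_coloring n a"
    unfolding a_def using one_two_coloring(2)[OF ij] .
  have two_iff: "c k = 2 \<longleftrightarrow> k \<le> a \<or> k = a + 2" if "k \<in> {1..n}" for k
    unfolding coloring using that by (rule pair_coloring_eq_2_iff)
  have one_iff: "c k = 1 \<longleftrightarrow> \<not> (k \<le> a \<or> k = a + 2)" if "k \<in> {1..n}" for k
    using two_iff[OF that] color_cases[OF that] by auto
  define S where "S = {1..n} - {a + 1, a + 2}"
  have block: "{a + 1, a + 2} \<in> P"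
    using one_two_block[OF ij] ia ja by simp
  have "P - {{a + 1, a + 2}} \<in> partial_matchings {k \<in> S. c k = 2} {k \<in> S. c k = 1}"
  proof (rule partial_matching_by_colors)
    show "partition_on S (P - {{a + 1, a + 2}})"
      unfolding S_def using partition_on_Diff_block[OF blocks_partition block] .
    show "c l \<noteq> 2" if "k \<in> S" "l \<in> S" "k < l" "c k = 1" for k l
      using that unique[of k l] ia unfolding S_def by auto
  qed auto
  moreover have "{k \<in> S. c k = 2} = {1..a}" "{k \<in> S. c k = 1} = {a + 3..n}"
    using two_iff one_iff ja \<open>j \<in> {1..n}\<close> unfolding S_def by auto
  moreover have "P = insert {a + 1, a + 2} (P - {{a + 1, a + 2}})"
    using block by blast
  ultimately have "(P, c) \<in> pair_avoiders n a"
    unfolding pair_avoiders_def coloring by (metis (no_types, lifting) image_eqI)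
  moreover have "a + 2 \<le> n"
    using ij ja by simp
  ultimately show ?thesis by blast
qed

end

lemma avoiders_eq: "avoiders n = (\<Union>a\<le>n. split_avoiders n a) \<union> (\<Union>a<n - 1. pair_avoiders n a)"
proof
  show "avoiders n \<subseteq> (\<Union>a\<le>n. split_avoiders n a) \<union> (\<Union>a<n - 1. pair_avoiders n a)"
  proof
    fix \<sigma> assume \<sigma>: "\<sigma> \<in> avoiders n"
    obtain P c where \<sigma>_eq: "\<sigma> = (P, c)"
      by fastforce
    interpret avoider n P c
      using \<sigma> \<sigma>_eq by unfold_locales simp
    show "\<sigma> \<in> (\<Union>a\<le>n. split_avoiders n a) \<union> (\<Union>a<n - 1. pair_avoiders n a)"
    proof (cases "\<exists>i j. i \<in> {1..n} \<and> j \<in> {1..n} \<and> i < j \<and> c i = 1 \<and> c j = 2")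
      case True
      then obtain a where "a + 2 \<le> n" "(P, c) \<in> pair_avoiders n a"
        using pair_case by blast
      then show ?thesis
        using \<sigma>_eq by auto
    next
      case False
      then obtain a where "a \<le> n" "(P, c) \<in> split_avoiders n a"
        using split_case by blast
      then show ?thesis
        using \<sigma>_eq by auto
    qed
  qed
  show "(\<Union>a\<le>n. split_avoiders n a) \<union> (\<Union>a<n - 1. pair_avoiders n a) \<subseteq> avoiders n"
  proof (intro Un_least UN_least)
    fix a assume "a \<in> {..n}"
    then show "split_avoiders n a \<subseteq> avoiders n"
      by (intro split_avoiders_subset) simp
  next
    fix a assume "a \<in> {..<n - 1}"
    then show "pair_avoiders n a \<subseteq> avoiders n"
      by (intro pair_avoiders_subset) simp
  qed
qed

lemma split_coloring_inj:
  assumes "a \<le> n" "b \<le> n" "split_coloring n a = split_coloring n b"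
  shows "a = b"
proof -
  have "{i \<in> {1..n}. split_coloring n a i = 2} = {1..a}" if "a \<le> n" for a
    using that by (auto simp: split_coloring_eq_2_iff)
  then show ?thesis
    using assms by (metis card_atLeastAtMost diff_Suc_1)
qed

lemma pair_coloring_inj:
  assumes "a + 2 \<le> n" "b + 2 \<le> n" "pair_coloring n a = pair_coloring n b"
  shows "a = b"
proof -
  have "{i \<in> {1..n}. pair_coloring n a i = 2} = insert (a + 2) {1..a}" if "a + 2 \<le> n" for a
    using that by (auto simp: pair_coloring_eq_2_iff)
  then have "card {i \<in> {1..n}. pair_coloring n a i = 2} = a + 1" if "a + 2 \<le> n" for a
    using that by simp
  then show ?thesis
    using assms by (metis add_right_cancel)
qed

lemma split_coloring_neq_pair_coloring:
  assumes "b + 2 \<le> n"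
  shows "split_coloring n a \<noteq> pair_coloring n b"
proof
  assume eq: "split_coloring n a = pair_coloring n b"
  have "b + 1 \<in> {1..n}" "b + 2 \<in> {1..n}"
    using assms by auto
  then have "split_coloring n a (b + 1) = 1" "split_coloring n a (b + 2) = 2"
    unfolding eq by (simp_all add: pair_coloring_apply)
  with \<open>b + 1 \<in> {1..n}\<close> \<open>b + 2 \<in> {1..n}\<close> show False
    by (cases "b + 1 \<le> a"; cases "b + 2 \<le> a") (simp_all add: split_coloring_apply)
qed

lemma card_split_avoiders:
  assumes "a \<le> n"
  shows "card (split_avoiders n a) = num_matchings a (n - a)"
proof -
  have "card (split_avoiders n a) = card (partial_matchings {1..a} {a + 1..n})"
    unfolding split_avoiders_def by (rule card_image) (simp add: inj_on_def)
  also have "\<dots> = num_matchings a (n - a)"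
    by (subst card_partial_matchings) auto
  finally show ?thesis .
qed

lemma card_pair_avoiders:
  assumes "a + 2 \<le> n"
  shows "card (pair_avoiders n a) = num_matchings a (n - a - 2)"
proof -
  let ?M = "partial_matchings {1..a} {a + 3..n}"
  have fresh: "{a + 1, a + 2} \<notin> Q" if "Q \<in> ?M" for Q
  proof
    assume "{a + 1, a + 2} \<in> Q"
    then have "a + 1 \<in> \<Union>Q" by blast
    moreover have "\<Union>Q = {1..a} \<union> {a + 3..n}"
      using that partition_onD1 by (auto simp: partial_matchings_def)
    ultimately show False by simp
  qed
  have "pair_avoiders n a = (\<lambda>P. (P, pair_coloring n a)) ` insert {a + 1, a + 2} ` ?M"
    by (simp add: pair_avoiders_def image_image)
  then have "card (pair_avoiders n a) = card (insert {a + 1, a + 2} ` ?M)"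
    by (simp add: card_image inj_on_def)
  also have "\<dots> = card ?M"
    using fresh by (rule card_image_insert)
  also have "\<dots> = num_matchings a (n - a - 2)"
    by (subst card_partial_matchings) auto
  finally show ?thesis .
qed

lemma card_avoiders:
  "card (avoiders n) = (\<Sum>a\<le>n. num_matchings a (n - a)) + (\<Sum>a<n - 1. num_matchings a (n - a - 2))"
proof -
  have fin: "finite (split_avoiders n a)" "finite (pair_avoiders n a)" for a
    by (simp_all add: split_avoiders_def pair_avoiders_def finite_partial_matchings)
  have split_snd: "snd \<sigma> = split_coloring n a" if "\<sigma> \<in> split_avoiders n a" for \<sigma> a
    using that by (auto simp: split_avoiders_def)
  have pair_snd: "snd \<sigma> = pair_coloring n a" if "\<sigma> \<in> pair_avoiders n a" for \<sigma> a
    using that by (auto simp: pair_avoiders_def)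
  have split_disj: "split_avoiders n a \<inter> split_avoiders n b = {}" if "a \<le> n" "b \<le> n" "a \<noteq> b" for a b
  proof -
    have False if "\<sigma> \<in> split_avoiders n a" "\<sigma> \<in> split_avoiders n b" for \<sigma>
      using split_snd[OF that(1)] split_snd[OF that(2)] split_coloring_inj \<open>a \<le> n\<close> \<open>b \<le> n\<close> \<open>a \<noteq> b\<close> by simp
    then show ?thesis by blast
  qed
  have pair_disj: "pair_avoiders n a \<inter> pair_avoiders n b = {}" if "a < n - 1" "b < n - 1" "a \<noteq> b" for a b
  proof -
    have False if "\<sigma> \<in> pair_avoiders n a" "\<sigma> \<in> pair_avoiders n b" for \<sigma>
      using pair_snd[OF that(1)] pair_snd[OF that(2)] pair_coloring_inj[of a n b] \<open>a < n - 1\<close> \<open>b < n - 1\<close> \<open>a \<noteq> b\<close>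
      by (simp add: less_diff_conv)
    then show ?thesis by blast
  qed
  have split_pair_disj: "\<sigma> \<notin> pair_avoiders n b" if "\<sigma> \<in> split_avoiders n a" "b < n - 1" for \<sigma> a b
    using split_snd[OF that(1)] pair_snd[of \<sigma> b] split_coloring_neq_pair_coloring[of b n a] that(2) by auto
  have "card (avoiders n) = card (\<Union>a\<le>n. split_avoiders n a) + card (\<Union>a<n - 1. pair_avoiders n a)"
    unfolding avoiders_eq using fin split_pair_disj by (intro card_Un_disjoint) auto
  also have "\<dots> = (\<Sum>a\<le>n. card (split_avoiders n a)) + (\<Sum>a<n - 1. card (pair_avoiders n a))"
    using fin split_disj pair_disj by (simp add: card_UN_disjoint)
  finally show ?thesis
    by (simp add: card_split_avoiders card_pair_avoiders less_diff_conv)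
qed

lemma sum_swap_num_matchings:
  assumes "\<forall>i\<in>I. g i \<le> k"
  shows "(\<Sum>j\<le>k. \<Sum>i\<in>I. f i * (g i choose j) * (h i choose j) * fact j)
       = (\<Sum>i\<in>I. f i * num_matchings (g i) (h i))"
proof -
  have "(\<Sum>j\<le>k. f i * (g i choose j) * (h i choose j) * fact j) = f i * num_matchings (g i) (h i)"
    if "i \<in> I" for i
    using num_matchings_eq_sum_upto[of "g i" k "h i"] assms that
    by (simp add: mult.assoc flip: sum_distrib_left)
  then show ?thesis
    by (subst sum.swap) simp
qed

lemma sum_choose_fact_antidiagonal:
  "(\<Sum>j\<le>n. \<Sum>i=1..n. ((i - 1) choose j) * ((n - i) choose j) * fact j)
     = (\<Sum>a<n. num_matchings a (n - 1 - a))"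
proof -
  have "(\<Sum>j\<le>n. \<Sum>i=1..n. ((i - 1) choose j) * ((n - i) choose j) * fact j)
      = (\<Sum>i=1..n. num_matchings (i - 1) (n - i))"
    using sum_swap_num_matchings[of "{1..n}" "\<lambda>i. i - 1" n "\<lambda>_. 1" "\<lambda>i. n - i"]
    by (simp add: le_diff_conv)
  also have "\<dots> = (\<Sum>a<n. num_matchings a (n - 1 - a))"
    unfolding One_nat_def sum.atLeast1_atMost_eq by simp
  finally show ?thesis .
qed

lemma sum_choose_fact_antidiagonal_pred:
  "(\<Sum>j\<le>n. \<Sum>i=1..n-1. ((i - 1) choose j) * ((n - i - 1) choose j) * fact j)
     = (\<Sum>a<n - 1. num_matchings a (n - a - 2))"
proof -
  have "(\<Sum>j\<le>n. \<Sum>i=1..n-1. ((i - 1) choose j) * ((n - i - 1) choose j) * fact j)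
      = (\<Sum>i=1..n-1. num_matchings (i - 1) (n - i - 1))"
    using sum_swap_num_matchings[of "{1..n-1}" "\<lambda>i. i - 1" n "\<lambda>_. 1" "\<lambda>i. n - i - 1"]
    by (cases n) (simp_all add: le_diff_conv)
  also have "\<dots> = (\<Sum>a<n - 1. num_matchings a (n - a - 2))"
    unfolding One_nat_def sum.atLeast1_atMost_eq by (simp add: numeral_2_eq_2)
  finally show ?thesis .
qed

lemma sum_weighted_choose_fact_antidiagonal:
  "(\<Sum>j\<le>n. \<Sum>i=2..n. (i - 1) * ((i - 2) choose j) * ((n - i) choose j) * fact j)
     = (\<Sum>a<n - 1. (a + 1) * num_matchings a (n - 2 - a))"
proof -
  have "(\<Sum>j\<le>n. \<Sum>i=2..n. (i - 1) * ((i - 2) choose j) * ((n - i) choose j) * fact j)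
      = (\<Sum>i=2..n. (i - 1) * num_matchings (i - 2) (n - i))"
    using sum_swap_num_matchings[of "{2..n}" "\<lambda>i. i - 2" n "\<lambda>i. i - 1" "\<lambda>i. n - i"]
    by (simp add: le_diff_conv)
  also have "\<dots> = (\<Sum>a<n - 1. (a + 1) * num_matchings a (n - 2 - a))"
  proof (cases n)
    case (Suc m)
    show ?thesis
      unfolding Suc numeral_2_eq_2 sum.atLeast_Suc_atMost_Suc_shift sum.atLeast1_atMost_eq by simp
  qed simp
  finally show ?thesis .
qed

text \<open>The recursion of \<open>num_matchings\<close> applied termwise, then the reflection \<open>a \<mapsto> m - 1 - a\<close>
  together with symmetry.\<close>

lemma sum_num_matchings_antidiagonal_Suc:
  "(\<Sum>a\<le>Suc m. num_matchings a (Suc m - a))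
     = 1 + (\<Sum>a\<le>m. num_matchings a (m - a)) + (\<Sum>a<m. (a + 1) * num_matchings a (m - 1 - a))"
proof -
  have "(\<Sum>a\<le>Suc m. num_matchings a (Suc m - a)) = 1 + (\<Sum>a\<le>m. num_matchings (Suc a) (m - a))"
    by (simp only: sum.atMost_Suc_shift diff_zero num_matchings.simps(1) diff_Suc_Suc)
  also have "\<dots> = 1 + (\<Sum>a\<le>m. num_matchings a (m - a)) + (\<Sum>a\<le>m. (m - a) * num_matchings a (m - a - 1))"
    by (simp add: sum.distrib)
  also have "(\<Sum>a\<le>m. (m - a) * num_matchings a (m - a - 1)) = (\<Sum>a<m. (m - a) * num_matchings a (m - a - 1))"
    by (simp flip: lessThan_Suc_atMost)
  also have "\<dots> = (\<Sum>a<m. (m - (m - Suc a)) * num_matchings (m - Suc a) (m - (m - Suc a) - 1))"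
    by (rule sum.nat_diff_reindex[symmetric])
  also have "\<dots> = (\<Sum>a<m. (a + 1) * num_matchings a (m - 1 - a))"
    by (intro sum.cong refl) (simp add: num_matchings_commute[of "m - Suc _"] Suc_diff_Suc)
  finally show ?thesis .
qed

theorem mainTheorem3:
  fixes n :: nat
  assumes "n \<ge> 1"
  shows "card (avoiders n) =
      (\<Sum>j\<le>n. \<Sum>i=1..n. ((i - 1) choose j) * ((n - i) choose j) * fact j)
    + (\<Sum>j\<le>n. \<Sum>i=2..n. (i - 1) * ((i - 2) choose j) * ((n - i) choose j) * fact j)
    + (\<Sum>j\<le>n. \<Sum>i=1..n-1. ((i - 1) choose j) * ((n - i - 1) choose j) * fact j)
    + 1"
proof -
  obtain m where n: "n = Suc m"
    using assms by (cases n) auto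
  show ?thesis
    unfolding card_avoiders sum_choose_fact_antidiagonal sum_weighted_choose_fact_antidiagonal
      sum_choose_fact_antidiagonal_pred
    unfolding n sum_num_matchings_antidiagonal_Suc
    by (simp add: lessThan_Suc_atMost)
qed

end
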